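(* Let $G$ be a connected graph. (a) If $G$ admits a pairing strong resolving set, then $O_{\rm SR}(G)=\mathcal{M}$. (b) If $G$ admits a quasi-pairing strong resolving set, then $O_{\rm SR}(G)\in\{\mathcal{M},\mathcal{N}\}$. (c) If $\Delta(G_{\rm SR})\ge 2$, then $O_{\rm SR}(G)\in\{\mathcal{N},\mathcal{B}\}$. (d) If for every $u\in V(G_{\rm SR})$ the subgraph of $G_{\rm SR}$ induced by $V(G_{\rm SR})\setminus\{u\}$ has maximum degree at least $2$, then $O_{\rm SR}(G)=\mathcal{B}$.
   Context: All graphs are finite, simple and undirected; $d(x,y)$ is the shortest-path distance; $\Delta(\cdot)$ denotes maximum degree. A set $S\subseteq V(G)$ is a strong resolving set of a connected graph $G$ if for all distinct $x,y\in V(G)$ there exists $z\in S$ such that $x$ lies on a $y$–$z$ geodesic or $y$ lies on an $x$–$z$ geodesic. A vertex $u$ is maximally distant from $v$ if $d(u,v)\ge d(w,v)$ for every neighbor $w$ of $u$; $u,v$ are mutually maximally distant (MMD) if each is maximally distant from the other. The strong resolving graph $G_{\rm SR}$ has vertex set $\{x: x\text{ is MMD with some }y\}$ and edges exactly the MMD pairs. The Maker–Breaker strong resolving game on $G$: Maker and Breaker alternately select a not-yet-chosen vertex of $G$; Maker wins if the vertices he selects contain a strong resolving set of $G$, and Breaker wins otherwise. In the M-game Maker moves first, in the B-game Breaker moves first. $O_{\rm SR}(G)=\mathcal{M}$ if Maker has a winning strategy in both the M-game and the B-game, $O_{\rm SR}(G)=\mathcal{B}$ if Breaker has a winning strategy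 in both, and $O_{\rm SR}(G)=\mathcal{N}$ if the first player has a winning strategy in each. A family $X=\{\{u_i,w_i\}: i\in[\beta]\}$ with $\bigcup X\subseteq V(G_{\rm SR})$ and $|\bigcup X|=2\beta$ is a pairing strong resolving set of $G$ if every $Z\subseteq V(G_{\rm SR})$ satisfying ($\dagger$) $|Z|=\beta$ and $Z\cap\{u_i,w_i\}\ne\emptyset$ for all $i\in[\beta]$ is a strong resolving set of $G$. Such an $X$ is a quasi-pairing strong resolving set of $G$ if there is a vertex $v\in V(G_{\rm SR})\setminus\bigcup X$ such that $Z\cup\{v\}$ is a strong resolving set of $G$ for every $Z\subseteq V(G_{\rm SR})$ satisfying ($\dagger$). *)

theory Defs
  imports Main
begin

definition simple_graph :: "'a set \<Rightarrow> ('a \<Rightarrow> 'a \<Rightarrow> bool) \<Rightarrow> bool" where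
  "simple_graph V E \<longleftrightarrow> finite V \<and> (\<forall>x y. E x y \<longrightarrow> x \<in> V \<and> y \<in> V)
     \<and> (\<forall>x y. E x y \<longrightarrow> E y x) \<and> (\<forall>x. \<not> E x x)"

definition walk :: "'a set \<Rightarrow> ('a \<Rightarrow> 'a \<Rightarrow> bool) \<Rightarrow> 'a list \<Rightarrow> bool" where
  "walk V E xs \<longleftrightarrow> xs \<noteq> [] \<and> set xs \<subseteq> V \<and> successively E xs"

definition connected_graph :: "'a set \<Rightarrow> ('a \<Rightarrow> 'a \<Rightarrow> bool) \<Rightarrow> bool" where
  "connected_graph V E \<longleftrightarrow> simple_graph V E \<and> V \<noteq> {} \<and>
     (\<forall>x\<in>V. \<forall>y\<in>V. \<exists>xs. walk V E xs \<and> hd xs = x \<and> last xs = y)"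

definition dist :: "'a set \<Rightarrow> ('a \<Rightarrow> 'a \<Rightarrow> bool) \<Rightarrow> 'a \<Rightarrow> 'a \<Rightarrow> nat" where
  "dist V E x y = (LEAST n. \<exists>xs. walk V E xs \<and> hd xs = x \<and> last xs = y \<and> length xs = Suc n)"

definition on_geodesic :: "'a set \<Rightarrow> ('a \<Rightarrow> 'a \<Rightarrow> bool) \<Rightarrow> 'a \<Rightarrow> 'a \<Rightarrow> 'a \<Rightarrow> bool" where
  "on_geodesic V E x y z \<longleftrightarrow> (\<exists>xs. walk V E xs \<and> hd xs = y \<and> last xs = z
      \<and> length xs = Suc (dist V E y z) \<and> x \<in> set xs)"

definition strong_resolving_set :: "'a set \<Rightarrow> ('a \<Rightarrow> 'a \<Rightarrow> bool) \<Rightarrow> 'a set \<Rightarrow> bool" where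
  "strong_resolving_set V E S \<longleftrightarrow> S \<subseteq> V \<and>
     (\<forall>x\<in>V. \<forall>y\<in>V. x \<noteq> y \<longrightarrow>
        (\<exists>z\<in>S. on_geodesic V E x y z \<or> on_geodesic V E y x z))"

definition maximally_distant :: "'a set \<Rightarrow> ('a \<Rightarrow> 'a \<Rightarrow> bool) \<Rightarrow> 'a \<Rightarrow> 'a \<Rightarrow> bool" where
  "maximally_distant V E u v \<longleftrightarrow> u \<in> V \<and> v \<in> V \<and>
     (\<forall>w. E u w \<longrightarrow> dist V E w v \<le> dist V E u v)"

text \<open>Edges of the strong resolving graph: MMD pairs of distinct vertices.\<close>
definition mmd :: "'a set \<Rightarrow> ('a \<Rightarrow> 'a \<Rightarrow> bool) \<Rightarrow> 'a \<Rightarrow> 'a \<Rightarrow> bool" where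
  "mmd V E u v \<longleftrightarrow> u \<noteq> v \<and> maximally_distant V E u v \<and> maximally_distant V E v u"

definition VSR :: "'a set \<Rightarrow> ('a \<Rightarrow> 'a \<Rightarrow> bool) \<Rightarrow> 'a set" where
  "VSR V E = {x. \<exists>y. maximally_distant V E x y \<and> maximally_distant V E y x}"

definition SR_induced_maxdeg_ge2 :: "'a set \<Rightarrow> ('a \<Rightarrow> 'a \<Rightarrow> bool) \<Rightarrow> 'a set \<Rightarrow> bool" where
  "SR_induced_maxdeg_ge2 V E U \<longleftrightarrow> (\<exists>x\<in>U. card {w\<in>U. mmd V E x w} \<ge> 2)"

text \<open>Pairing strong resolving set: a finite family of disjoint 2-subsets of V(G_SR).\<close>
definition pair_family :: "'a set \<Rightarrow> ('a \<Rightarrow> 'a \<Rightarrow> bool) \<Rightarrow> 'a set set \<Rightarrow> bool" where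
  "pair_family V E X \<longleftrightarrow> finite X \<and> (\<forall>p\<in>X. card p = 2) \<and> \<Union>X \<subseteq> VSR V E
     \<and> card (\<Union>X) = 2 * card X"

definition transversal :: "'a set \<Rightarrow> ('a \<Rightarrow> 'a \<Rightarrow> bool) \<Rightarrow> 'a set set \<Rightarrow> 'a set \<Rightarrow> bool" where
  "transversal V E X Z \<longleftrightarrow> Z \<subseteq> VSR V E \<and> card Z = card X \<and> (\<forall>p\<in>X. Z \<inter> p \<noteq> {})"

definition pairing_srs :: "'a set \<Rightarrow> ('a \<Rightarrow> 'a \<Rightarrow> bool) \<Rightarrow> 'a set set \<Rightarrow> bool" where
  "pairing_srs V E X \<longleftrightarrow> pair_family V E X \<and>
     (\<forall>Z. transversal V E X Z \<longrightarrow> strong_resolving_set V E Z)"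

definition quasi_pairing_srs :: "'a set \<Rightarrow> ('a \<Rightarrow> 'a \<Rightarrow> bool) \<Rightarrow> 'a set set \<Rightarrow> bool" where
  "quasi_pairing_srs V E X \<longleftrightarrow> pair_family V E X \<and>
     (\<exists>v \<in> VSR V E - \<Union>X. \<forall>Z. transversal V E X Z \<longrightarrow> strong_resolving_set V E (insert v Z))"

text \<open>Maker--Breaker game on board V with Maker's winning condition W (evaluated on Maker's
  final set). Positions: Maker's set M, Breaker's set B, and whether Maker is to move.\<close>

inductive maker_wins :: "'a set \<Rightarrow> ('a set \<Rightarrow> bool) \<Rightarrow> 'a set \<Rightarrow> 'a set \<Rightarrow> bool \<Rightarrow> bool"
  for V W where
  mw_end: "V \<subseteq> M \<union> B \<Longrightarrow> W M \<Longrightarrow> maker_wins V W M B t"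
| mw_maker: "v \<in> V - (M \<union> B) \<Longrightarrow> maker_wins V W (insert v M) B False \<Longrightarrow> maker_wins V W M B True"
| mw_breaker: "V - (M \<union> B) \<noteq> {} \<Longrightarrow> (\<forall>v \<in> V - (M \<union> B). maker_wins V W M (insert v B) True)
     \<Longrightarrow> maker_wins V W M B False"

inductive breaker_wins :: "'a set \<Rightarrow> ('a set \<Rightarrow> bool) \<Rightarrow> 'a set \<Rightarrow> 'a set \<Rightarrow> bool \<Rightarrow> bool"
  for V W where
  bw_end: "V \<subseteq> M \<union> B \<Longrightarrow> \<not> W M \<Longrightarrow> breaker_wins V W M B t"
| bw_breaker: "v \<in> V - (M \<union> B) \<Longrightarrow> breaker_wins V W M (insert v B) True \<Longrightarrow> breaker_wins V W M B False"
| bw_maker: "V - (M \<union> B) \<noteq> {} \<Longrightarrow> (\<forall>v \<in> V - (M \<union> B). breaker_wins V W (insert v M) B False)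
     \<Longrightarrow> breaker_wins V W M B True"

definition sr_win :: "'a set \<Rightarrow> ('a \<Rightarrow> 'a \<Rightarrow> bool) \<Rightarrow> 'a set \<Rightarrow> bool" where
  "sr_win V E M \<longleftrightarrow> (\<exists>S\<subseteq>M. strong_resolving_set V E S)"

(* M-game: Maker first (True); B-game: Breaker first (False) *)
definition outcome_M :: "'a set \<Rightarrow> ('a \<Rightarrow> 'a \<Rightarrow> bool) \<Rightarrow> bool" where
  "outcome_M V E \<longleftrightarrow> maker_wins V (sr_win V E) {} {} True \<and> maker_wins V (sr_win V E) {} {} False"

definition outcome_B :: "'a set \<Rightarrow> ('a \<Rightarrow> 'a \<Rightarrow> bool) \<Rightarrow> bool" where
  "outcome_B V E \<longleftrightarrow> breaker_wins V (sr_win V E) {} {} True \<and> breaker_wins V (sr_win V E) {} {} False"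

definition outcome_N :: "'a set \<Rightarrow> ('a \<Rightarrow> 'a \<Rightarrow> bool) \<Rightarrow> bool" where
  "outcome_N V E \<longleftrightarrow> maker_wins V (sr_win V E) {} {} True \<and> breaker_wins V (sr_win V E) {} {} False"

end

theory Submission
  imports Defs
begin

(* Maker's side is a pairing strategy: answering every Breaker move inside a pair of X with its
   partner, Maker ends up meeting every pair, so his vertices contain a transversal and hence a
   strong resolving set. In the quasi-pairing case Maker spends his first move on the extra
   vertex v, which is only possible when he moves first.
   Breaker's side rests on the fact that every strong resolving set contains an end of every
   edge of G_SR, because a vertex maximally distant from v cannot be an inner vertex of a
   geodesic starting at v. If x has two G_SR-neighbours w1 and w2, Breaker claims x and then
   answers w1 with w2 and vice versa, so Maker never covers both edges x w1 and x w2. Under the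
   hypothesis of (d) such a vertex x survives the loss of the vertex Maker claims first.
   Finite Maker-Breaker games are determined, which turns these guaranteed wins into the
   stated outcome classes. *)

section \<open>Maker-Breaker games on a finite board\<close>

lemma card_free_decreases:
  assumes "finite V" and "v \<in> V - (M \<union> B)"
  shows card_free_insert_maker: "card (V - (insert v M \<union> B)) < card (V - (M \<union> B))"
    and card_free_insert_breaker: "card (V - (M \<union> insert v B)) < card (V - (M \<union> B))"
  by (rule psubset_card_mono; use assms in blast)+

lemma maker_breaker_determined:
  assumes "finite V"
  shows "maker_wins V W M B t \<or> breaker_wins V W M B t"
proof (induction "card (V - (M \<union> B))" arbitrary: M B t rule: less_induct)
  case (less M B t)
  show ?case
  proof (cases "V \<subseteq> M \<union> B")
    case True
    then show ?thesis by (cases "W M") (auto intro: mw_end bw_end)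
  next
    case False
    have IH_maker: "maker_wins V W (insert v M) B t' \<or> breaker_wins V W (insert v M) B t'"
      and IH_breaker: "maker_wins V W M (insert v B) t' \<or> breaker_wins V W M (insert v B) t'"
      if "v \<in> V - (M \<union> B)" for v t'
      using less card_free_decreases[OF assms that] by auto
    show ?thesis
    proof (cases t)
      case True
      then show ?thesis
        using False IH_maker by (metis Diff_eq_empty_iff mw_maker bw_maker)
    next
      case False
      then show ?thesis
        using \<open>\<not> V \<subseteq> M \<union> B\<close> IH_breaker by (metis Diff_eq_empty_iff mw_breaker bw_breaker)
    qed
  qed
qed

lemma maker_wins_pairing_strategy:
  assumes fin: "finite V" and two: "\<forall>p\<in>X. card p = 2" and disj: "pairwise disjnt X"
    and sub: "\<Union>X \<subseteq> V"
    and win: "\<And>M'. M \<subseteq> M' \<Longrightarrow> \<forall>p\<in>X. p \<inter> M' \<noteq> {} \<Longrightarrow> W M'"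
    and safe: "\<forall>p\<in>X. p \<inter> M \<noteq> {} \<or> p \<inter> B = {}"
  shows "maker_wins V W M B t"
  using win safe
proof (induction "card (V - (M \<union> B))" arbitrary: M B t rule: less_induct)
  case (less M B t)
  have IH: "maker_wins V W M' B' t'"
    if "card (V - (M' \<union> B')) < card (V - (M \<union> B))" "M \<subseteq> M'"
      and "\<forall>p\<in>X. p \<inter> M' \<noteq> {} \<or> p \<inter> B' = {}" for M' B' t'
    using less.hyps[OF that(1)] less.prems(1) that(2,3) by (meson order_trans)
  show ?case
  proof (cases "V \<subseteq> M \<union> B")
    case True
    have "p \<inter> M \<noteq> {}" if p: "p \<in> X" for p
    proof -
      have "p \<noteq> {}" using two p by auto
      moreover have "p \<subseteq> M \<union> B" using p sub True by blast
      ultimately show ?thesis using less.prems(2) p by blast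
    qed
    then show ?thesis using True less.prems(1) by (blast intro: mw_end)
  next
    case False
    then obtain v0 where v0: "v0 \<in> V - (M \<union> B)" by blast
    show ?thesis
    proof (cases t)
      case True
      have "maker_wins V W (insert v0 M) B False"
        using less.prems(2) by (intro IH card_free_insert_maker[OF fin v0]) auto
      then show ?thesis using True v0 by (auto intro: mw_maker)
    next
      case False
      have "maker_wins V W M (insert v B) True" if v: "v \<in> V - (M \<union> B)" for v
      proof (cases "\<exists>p\<in>X. v \<in> p \<and> p \<inter> M = {}")
        case True
        then obtain p where p: "p \<in> X" "v \<in> p" "p \<inter> M = {}" by blast
        obtain a b where "p = {a, b}" "a \<noteq> b" using two p(1) card_2_iff by metis
        then obtain u where u: "p = {v, u}" "u \<noteq> v" using p(2) by blast
        have "p \<inter> B = {}" using less.prems(2) p by blast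
        then have u_free: "u \<in> V - (M \<union> insert v B)" using u p sub by auto
        have "v \<notin> q" if "q \<in> X" "q \<noteq> p" for q
          using disj p that unfolding pairwise_def disjnt_def by blast
        then have "\<forall>q\<in>X. q \<inter> insert u M \<noteq> {} \<or> q \<inter> insert v B = {}"
          using less.prems(2) u by blast
        then have "maker_wins V W (insert u M) (insert v B) False"
          using card_free_insert_maker[OF fin u_free] card_free_insert_breaker[OF fin v]
          by (intro IH) auto
        then show ?thesis using u_free by (blast intro: mw_maker)
      next
        case False
        then show ?thesis
          using less.prems(2) card_free_insert_breaker[OF fin v] by (intro IH) auto
      qed
      then show ?thesis using \<open>\<not> t\<close> v0 by (auto intro: mw_breaker)
    qed
  qed
qed

lemma breaker_wins_no_winning_extension:
  assumes fin: "finite V" and "M \<inter> B = {}"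
    and "\<And>M'. M \<subseteq> M' \<Longrightarrow> M' \<inter> B = {} \<Longrightarrow> \<not> W M'"
  shows "breaker_wins V W M B t"
  using assms(2-)
proof (induction "card (V - (M \<union> B))" arbitrary: M B t rule: less_induct)
  case (less M B t)
  show ?case
  proof (cases "V \<subseteq> M \<union> B")
    case True
    then show ?thesis using less.prems by (blast intro: bw_end)
  next
    case False
    then obtain v0 where v0: "v0 \<in> V - (M \<union> B)" by blast
    have maker_moves: "breaker_wins V W (insert v M) B False" if v: "v \<in> V - (M \<union> B)" for v
      using less.prems v by (intro less.hyps[OF card_free_insert_maker[OF fin v]]) auto
    have breaker_moves: "breaker_wins V W M (insert v0 B) True"
      using less.prems v0 by (intro less.hyps[OF card_free_insert_breaker[OF fin v0]]) auto
    show ?thesis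
    proof (cases t)
      case True
      then show ?thesis using maker_moves v0 by (auto intro: bw_maker)
    next
      case False
      then show ?thesis using breaker_moves v0 by (auto intro: bw_breaker)
    qed
  qed
qed

lemma breaker_wins_pairing_strategy:
  assumes fin: "finite V" and w: "w1 \<in> V" "w2 \<in> V" "w1 \<noteq> w2"
    and "M \<inter> B = {}" "w1 \<notin> M" "w2 \<notin> M"
    and "\<And>M'. M \<subseteq> M' \<Longrightarrow> M' \<inter> B = {} \<Longrightarrow> W M' \<Longrightarrow> w1 \<in> M' \<and> w2 \<in> M'"
  shows "breaker_wins V W M B t"
  using assms(5-)
proof (induction "card (V - (M \<union> B))" arbitrary: M B t rule: less_induct)
  case (less M B t)
  have IH: "breaker_wins V W M' B' t'"
    if "card (V - (M' \<union> B')) < card (V - (M \<union> B))" "M \<subseteq> M'" "B \<subseteq> B'"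
      and "M' \<inter> B' = {}" "w1 \<notin> M'" "w2 \<notin> M'" for M' B' t'
  proof (rule less.hyps[OF that(1) that(4-6)])
    fix M'' assume "M' \<subseteq> M''" "M'' \<inter> B' = {}" "W M''"
    then show "w1 \<in> M'' \<and> w2 \<in> M''" using that(2,3) by (intro less.prems(4)) auto
  qed
  show ?case
  proof (cases "V \<subseteq> M \<union> B")
    case True
    have "\<not> W M" using less.prems(1,2,4) by blast
    then show ?thesis using True by (rule bw_end[rotated])
  next
    case False
    then obtain v0 where v0: "v0 \<in> V - (M \<union> B)" by blast
    \<comment> \<open>Maker has just claimed the end a of the pair; Breaker claims the other end b
      (unless he already owns it), after which no winning set is reachable.\<close>
    have answer: "breaker_wins V W (insert a M) B False"
      if ab: "{a, b} = {w1, w2}" and a: "a \<in> V - (M \<union> B)" for a b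
    proof -
      have b: "b \<in> V" "b \<notin> insert a M" using ab w less.prems(2,3) by (auto simp: doubleton_eq_iff)
      have blocked: "breaker_wins V W (insert a M) B' t'"
        if "B \<subseteq> B'" "b \<in> B'" "insert a M \<inter> B' = {}" for B' t'
      proof (rule breaker_wins_no_winning_extension[OF fin that(3)])
        fix M' assume M': "insert a M \<subseteq> M'" "M' \<inter> B' = {}"
        then have "b \<notin> M'" using that(2) by blast
        moreover have "M' \<inter> B = {}" using M'(2) that(1) by blast
        ultimately show "\<not> W M'" using less.prems(4)[of M'] M'(1) ab by (auto simp: doubleton_eq_iff)
      qed
      show ?thesis
      proof (cases "b \<in> B")
        case True
        then show ?thesis using a less.prems(1) by (intro blocked) auto
      next
        case False
        then have "breaker_wins V W (insert a M) (insert b B) True"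
          using a b less.prems(1) by (intro blocked) auto
        then show ?thesis using False b by (auto intro: bw_breaker)
      qed
    qed
    have maker_moves: "breaker_wins V W (insert v M) B False" if v: "v \<in> V - (M \<union> B)" for v
    proof (cases "v = w1 \<or> v = w2")
      case True
      then show ?thesis using answer[OF _ v, of w1] answer[OF _ v, of w2] by (auto simp: insert_commute)
    next
      case False
      then show ?thesis using v less.prems(1-3) by (intro IH card_free_insert_maker[OF fin v]) auto
    qed
    have breaker_moves: "breaker_wins V W M (insert v0 B) True"
      using v0 less.prems(1-3) by (intro IH card_free_insert_breaker[OF fin v0]) auto
    show ?thesis
    proof (cases t)
      case True
      then show ?thesis using maker_moves v0 by (auto intro: bw_maker)
    next
      case False
      then show ?thesis using breaker_moves v0 by (auto intro: bw_breaker)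
    qed
  qed
qed

section \<open>Walks, distances and geodesics\<close>

lemma walk_rev:
  assumes "simple_graph V E" and "walk V E xs"
  shows "walk V E (rev xs)"
proof -
  have "successively (\<lambda>x y. E y x) xs"
    using assms unfolding walk_def simple_graph_def by (auto intro: successively_mono)
  then show ?thesis using assms(2) unfolding walk_def by simp
qed

lemma walk_append:
  assumes "walk V E xs" and "walk V E (last xs # ys)"
  shows "walk V E (xs @ ys)"
  using assms by (cases ys) (auto simp: walk_def successively_append_iff)

lemma dist_commute:
  assumes "simple_graph V E"
  shows "dist V E a b = dist V E b a"
proof -
  have reverse: "\<exists>ys. walk V E ys \<and> hd ys = b \<and> last ys = a \<and> length ys = n"
    if "walk V E xs" "hd xs = a" "last xs = b" "length xs = n" for xs a b n
    using that walk_rev[OF assms that(1)]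
    by (intro exI[of _ "rev xs"]) (auto simp: hd_rev last_rev walk_def)
  have "(\<exists>xs. walk V E xs \<and> hd xs = a \<and> last xs = b \<and> length xs = Suc n)
    \<longleftrightarrow> (\<exists>xs. walk V E xs \<and> hd xs = b \<and> last xs = a \<and> length xs = Suc n)" for n
    using reverse[of _ a b] reverse[of _ b a] by blast
  then show ?thesis unfolding dist_def by simp
qed

lemma dist_less_length:
  assumes "walk V E xs"
  shows "dist V E (hd xs) (last xs) < length xs"
proof -
  have "length xs = Suc (length xs - 1)" using assms by (cases xs) (auto simp: walk_def)
  then have "dist V E (hd xs) (last xs) \<le> length xs - 1"
    unfolding dist_def using assms by (intro Least_le) metis
  then show ?thesis using \<open>length xs = Suc (length xs - 1)\<close> by linarith
qed

lemma shortest_walk_exists: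
  assumes "walk V E xs"
  obtains ys where "walk V E ys" "hd ys = hd xs" "last ys = last xs"
    "length ys = Suc (dist V E (hd xs) (last xs))"
proof -
  have "length xs = Suc (length xs - 1)" using assms by (cases xs) (auto simp: walk_def)
  then have "\<exists>n ys. walk V E ys \<and> hd ys = hd xs \<and> last ys = last xs \<and> length ys = Suc n"
    using assms by blast
  then have "\<exists>ys. walk V E ys \<and> hd ys = hd xs \<and> last ys = last xs
      \<and> length ys = Suc (dist V E (hd xs) (last xs))"
    unfolding dist_def by (rule LeastI_ex)
  then show ?thesis using that by blast
qed

lemma maximally_distant_on_geodesic_endpoint:
  assumes sg: "simple_graph V E" and md: "maximally_distant V E u v"
    and geo: "on_geodesic V E u v z"
  shows "u = z"
proof (rule ccontr)
  assume "u \<noteq> z"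
  obtain xs where xs: "walk V E xs" "hd xs = v" "last xs = z"
      "length xs = Suc (dist V E v z)" "u \<in> set xs"
    using geo unfolding on_geodesic_def by blast
  obtain ys rest where "xs = ys @ u # rest" using split_list[OF xs(5)] by blast
  moreover have "rest \<noteq> []" using calculation xs(3) \<open>u \<noteq> z\<close> by auto
  ultimately obtain w zs where split: "xs = ys @ u # w # zs" by (metis list.exhaust)
  have prefix: "walk V E (ys @ [u, w])" and suffix: "walk V E (w # zs)" and "E u w"
    using xs(1) unfolding split by (auto simp: walk_def successively_append_iff)
  have "walk V E (ys @ [u])" using xs(1) unfolding split by (auto simp: walk_def successively_append_iff)
  moreover have "hd (ys @ [u]) = v" using xs(2) unfolding split by (cases ys) auto
  ultimately have "dist V E v u < length ys + 1" using dist_less_length[of V E "ys @ [u]"] by simp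
  \<comment> \<open>the successor w of u on the geodesic is farther from v than u\<close>
  moreover have "length ys < dist V E v w"
  proof -
    have "hd (ys @ [u, w]) = v" using xs(2) unfolding split by (cases ys) auto
    then obtain ws where ws: "walk V E ws" "hd ws = v" "last ws = w" "length ws = Suc (dist V E v w)"
      using shortest_walk_exists[OF prefix] by auto
    have "walk V E (ws @ zs)" using walk_append[OF ws(1)] suffix ws(3) by simp
    moreover have "hd (ws @ zs) = v" "last (ws @ zs) = z"
      using ws xs(3) unfolding split by (cases zs; auto simp: walk_def)+
    ultimately have "dist V E v z < length (ws @ zs)" using dist_less_length by metis
    then show ?thesis using ws(4) xs(4) unfolding split by simp
  qed
  moreover have "dist V E w v \<le> dist V E u v" using md \<open>E u w\<close> unfolding maximally_distant_def by blast
  ultimately show False using dist_commute[OF sg, of u v] dist_commute[OF sg, of w v] by linarith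
qed

lemma strong_resolving_set_meets_mmd_pair:
  assumes sg: "simple_graph V E" and uv: "mmd V E u v" and S: "strong_resolving_set V E S"
  shows "u \<in> S \<or> v \<in> S"
proof -
  obtain z where "z \<in> S" "on_geodesic V E u v z \<or> on_geodesic V E v u z"
    using uv S unfolding strong_resolving_set_def mmd_def maximally_distant_def by blast
  then show ?thesis
    using maximally_distant_on_geodesic_endpoint[OF sg] uv unfolding mmd_def by blast
qed

lemma VSR_subset: "VSR V E \<subseteq> V"
  unfolding VSR_def maximally_distant_def by auto

lemma VSR_nonempty:
  assumes sg: "simple_graph V E" and "V \<noteq> {}"
  shows "VSR V E \<noteq> {}"
proof -
  let ?D = "(\<lambda>(a, b). dist V E a b) ` (V \<times> V)"
  have D: "finite ?D" "?D \<noteq> {}" using sg \<open>V \<noteq> {}\<close> unfolding simple_graph_def by auto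
  have "Max ?D \<in> ?D" using D by (rule Max_in)
  then obtain u v where uv: "u \<in> V" "v \<in> V" "dist V E u v = Max ?D" by auto
  have diam: "dist V E a b \<le> dist V E u v" if "a \<in> V" "b \<in> V" for a b
  proof -
    have "dist V E a b \<in> ?D" using that by force
    then show ?thesis unfolding uv(3) using D(1) by simp
  qed
  have nbr: "w \<in> V" if "E a w" for a w using that sg unfolding simple_graph_def by blast
  have "maximally_distant V E u v" "maximally_distant V E v u"
    unfolding maximally_distant_def using uv diam nbr dist_commute[OF sg, of v u] by auto
  then show ?thesis unfolding VSR_def by blast
qed

section \<open>The strong resolving game\<close>

lemma pairwise_disjnt_if_card_Union_eq_sum_card:
  assumes fin: "finite X" "\<forall>p\<in>X. finite p" and card_eq: "card (\<Union>X) = sum card X"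
  shows "pairwise disjnt X"
proof (rule pairwiseI)
  fix p q assume p: "p \<in> X" and q: "q \<in> X" and "p \<noteq> q"
  define R where "R = \<Union>(X - {p})"
  have fin_pR: "finite p" "finite R" using fin p unfolding R_def by auto
  have "card R \<le> sum card (X - {p})" unfolding R_def by (rule card_Union_le_sum_card)
  also have "\<dots> = sum card X - card p" using p by (simp add: sum_diff1_nat)
  finally have "card R \<le> sum card X - card p" .
  moreover have "card p \<le> sum card X" using fin p by (intro member_le_sum) auto
  moreover have "card (p \<union> R) = sum card X"
  proof -
    have "p \<union> R = \<Union>X" using p unfolding R_def by blast
    then show ?thesis using card_eq by simp
  qed
  ultimately have "card (p \<inter> R) = 0" using card_Un_Int[OF fin_pR] by linarith
  then have "p \<inter> R = {}" using fin_pR by simp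
  moreover have "q \<subseteq> R" using q \<open>p \<noteq> q\<close> unfolding R_def by blast
  ultimately show "disjnt p q" unfolding disjnt_def by blast
qed

lemma pair_family_disjoint:
  assumes "pair_family V E X"
  shows "pairwise disjnt X"
proof (rule pairwise_disjnt_if_card_Union_eq_sum_card)
  have two: "\<forall>p\<in>X. card p = 2" using assms unfolding pair_family_def by simp
  then show "\<forall>p\<in>X. finite p" using card_ge_0_finite by force
  show "finite X" using assms unfolding pair_family_def by simp
  have "sum card X = 2 * card X" using two by simp
  then show "card (\<Union>X) = sum card X" using assms unfolding pair_family_def by simp
qed

lemma transversal_within_hitting_set:
  assumes X: "pair_family V E X" and hit: "\<forall>p\<in>X. p \<inter> M \<noteq> {}"
  obtains Z where "transversal V E X Z" "Z \<subseteq> M"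
proof -
  have "\<forall>p\<in>X. \<exists>a. a \<in> p \<inter> M" using hit by blast
  then have "\<exists>f. \<forall>p\<in>X. f p \<in> p \<inter> M" by (rule bchoice)
  then obtain f where f: "\<forall>p\<in>X. f p \<in> p \<inter> M" by blast
  have "inj_on f X"
  proof (rule inj_onI)
    fix p q assume pq: "p \<in> X" "q \<in> X" "f p = f q"
    then have "\<not> disjnt p q" using f by (metis disjnt_iff IntD1)
    then show "p = q" using pairwiseD(1)[OF pair_family_disjoint[OF X] pq(1,2)] by blast
  qed
  then have "card (f ` X) = card X" by (rule card_image)
  moreover have "f ` X \<subseteq> VSR V E"
  proof -
    have "\<Union>X \<subseteq> VSR V E" using X unfolding pair_family_def by simp
    then show ?thesis using f by blast
  qed
  moreover have "\<forall>p\<in>X. f ` X \<inter> p \<noteq> {}" using f by blast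
  ultimately have "transversal V E X (f ` X)" unfolding transversal_def by blast
  moreover have "f ` X \<subseteq> M" using f by blast
  ultimately show ?thesis using that by blast
qed

lemma maker_wins_sr_game_pair_family:
  assumes fin: "finite V" and X: "pair_family V E X"
    and srs: "\<And>Z. transversal V E X Z \<Longrightarrow> strong_resolving_set V E (M \<union> Z)"
  shows "maker_wins V (sr_win V E) M {} t"
proof (rule maker_wins_pairing_strategy[OF fin, of X])
  show "\<forall>p\<in>X. card p = 2" using X unfolding pair_family_def by simp
  show "pairwise disjnt X" using X by (rule pair_family_disjoint)
  have "\<Union>X \<subseteq> VSR V E" using X unfolding pair_family_def by simp
  then show "\<Union>X \<subseteq> V" using VSR_subset by (rule subset_trans)
  show "\<forall>p\<in>X. p \<inter> M \<noteq> {} \<or> p \<inter> {} = {}" by simp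
  fix M' assume M': "M \<subseteq> M'" "\<forall>p\<in>X. p \<inter> M' \<noteq> {}"
  obtain Z where Z: "transversal V E X Z" "Z \<subseteq> M'"
    using transversal_within_hitting_set[OF X M'(2)] .
  then have "M \<union> Z \<subseteq> M'" using M'(1) by blast
  then show "sr_win V E M'" using srs[OF Z(1)] unfolding sr_win_def by blast
qed

lemma maker_first_wins_sr_game_quasi_pairing:
  assumes fin: "finite V" and "quasi_pairing_srs V E X"
  shows "maker_wins V (sr_win V E) {} {} True"
proof -
  obtain v where X: "pair_family V E X" and v: "v \<in> VSR V E"
    and srs: "\<And>Z. transversal V E X Z \<Longrightarrow> strong_resolving_set V E (insert v Z)"
    using assms(2) unfolding quasi_pairing_srs_def by blast
  have "maker_wins V (sr_win V E) {v} {} False"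
    using maker_wins_sr_game_pair_family[OF fin X] srs by simp
  then show ?thesis using v VSR_subset[of V E] by (auto intro: mw_maker)
qed

lemma breaker_to_move_wins_sr_game:
  assumes sg: "simple_graph V E" and U: "U \<subseteq> VSR V E" "SR_induced_maxdeg_ge2 V E U"
    and M: "M \<inter> U = {}"
  shows "breaker_wins V (sr_win V E) M {} False"
proof -
  have fin: "finite V" using sg unfolding simple_graph_def by simp
  have UV: "U \<subseteq> V" using U(1) VSR_subset by (rule subset_trans)
  obtain x where x: "x \<in> U" "2 \<le> card {w\<in>U. mmd V E x w}"
    using U(2) unfolding SR_induced_maxdeg_ge2_def by blast
  obtain N where "N \<subseteq> {w\<in>U. mmd V E x w}" "card N = 2"
    using obtain_subset_with_card_n[OF x(2)] by blast
  then obtain w1 w2 where w: "w1 \<in> U" "w2 \<in> U" "w1 \<noteq> w2" "mmd V E x w1" "mmd V E x w2"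
    by (auto simp: card_2_iff)
  have needs_pair: "w1 \<in> M' \<and> w2 \<in> M'" if "sr_win V E M'" "x \<notin> M'" for M'
    using that strong_resolving_set_meets_mmd_pair[OF sg w(4)]
      strong_resolving_set_meets_mmd_pair[OF sg w(5)] unfolding sr_win_def by blast
  have "breaker_wins V (sr_win V E) M {x} True"
    by (rule breaker_wins_pairing_strategy[OF fin]) (use UV w x M needs_pair in auto)
  moreover have "x \<in> V - (M \<union> {})" using x(1) UV M by blast
  ultimately show ?thesis by (rule bw_breaker[rotated])
qed

lemma breaker_wins_sr_game_maxdeg_ge2_minus_vertex:
  assumes sg: "simple_graph V E" and "V \<noteq> {}"
    and robust: "\<forall>u\<in>VSR V E. SR_induced_maxdeg_ge2 V E (VSR V E - {u})"
  shows "breaker_wins V (sr_win V E) {} {} t"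
proof -
  obtain u0 where u0: "u0 \<in> VSR V E" using VSR_nonempty[OF sg \<open>V \<noteq> {}\<close>] by blast
  have B_game: "breaker_wins V (sr_win V E) M {} False" if "M \<inter> (VSR V E - {u0}) = {}" for M
    using breaker_to_move_wins_sr_game[OF sg _ robust[rule_format, OF u0] that] by blast
  have "breaker_wins V (sr_win V E) {v} {} False" if "v \<in> V" for v
  proof (cases "v \<in> VSR V E")
    case True
    then show ?thesis using breaker_to_move_wins_sr_game[OF sg _ robust[rule_format, OF True]] by blast
  next
    case False
    then show ?thesis using B_game by blast
  qed
  then show ?thesis using B_game[of "{}"] \<open>V \<noteq> {}\<close> by (cases t) (auto intro: bw_maker)
qed

theorem mainTheorem2:
  fixes V :: "'a set" and E :: "'a \<Rightarrow> 'a \<Rightarrow> bool"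
  assumes "connected_graph V E"
  shows "((\<exists>X. pairing_srs V E X) \<longrightarrow> outcome_M V E)
       \<and> ((\<exists>X. quasi_pairing_srs V E X) \<longrightarrow> outcome_M V E \<or> outcome_N V E)
       \<and> (SR_induced_maxdeg_ge2 V E (VSR V E) \<longrightarrow> outcome_N V E \<or> outcome_B V E)
       \<and> ((\<forall>u\<in>VSR V E. SR_induced_maxdeg_ge2 V E (VSR V E - {u})) \<longrightarrow> outcome_B V E)"
proof (intro conjI impI)
  have sg: "simple_graph V E" and "V \<noteq> {}" using assms unfolding connected_graph_def by auto
  then have fin: "finite V" unfolding simple_graph_def by simp
  note determined = maker_breaker_determined[OF fin, of "sr_win V E" "{}" "{}"]
  show "outcome_M V E" if "\<exists>X. pairing_srs V E X"
    using that maker_wins_sr_game_pair_family[OF fin, of E _ "{}"]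
    unfolding outcome_M_def pairing_srs_def by auto
  show "outcome_M V E \<or> outcome_N V E" if "\<exists>X. quasi_pairing_srs V E X"
    using that maker_first_wins_sr_game_quasi_pairing[OF fin] determined[of False]
    unfolding outcome_M_def outcome_N_def by blast
  show "outcome_N V E \<or> outcome_B V E" if "SR_induced_maxdeg_ge2 V E (VSR V E)"
    using breaker_to_move_wins_sr_game[OF sg order_refl that] determined[of True]
    unfolding outcome_N_def outcome_B_def by auto
  show "outcome_B V E" if "\<forall>u\<in>VSR V E. SR_induced_maxdeg_ge2 V E (VSR V E - {u})"
    using breaker_wins_sr_game_maxdeg_ge2_minus_vertex[OF sg \<open>V \<noteq> {}\<close> that]
    unfolding outcome_B_def by blast
qed

end
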